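(* Let $f:\mathbb R^{n+m}\to\mathbb R$ be convex and let $g(x) = \inf_y f(x,y)$, assumed finite for every $x\in\mathbb R^n$ (so $g:\mathbb R^n\to\mathbb R$ is convex). Let $H_1:\mathbb R^n\to\mathbb R^n$ be the single-valued inverse of $x\mapsto x+\nabla_xg$ (so $H_1(u)=x\iff u\in x+\nabla_xg$) and $H:\mathbb R^{n+m}\to\mathbb R^{n+m}$ the single-valued inverse of $(x,y)\mapsto (x,y)+\nabla_{(x,y)}f$ (so $H(u,v)=(x,y)\iff (u,v)\in (x,y)+\nabla_{(x,y)}f$); these inverses exist. Define $J:\mathbb R^{n}\times \mathbb R^{n}\times \mathbb R^{m} \to \mathbb R^{m}$ by $J(x,u,y) = y - \pi_2 H(H_1(x+u)+u,y)$, where $\pi_2:\mathbb R^{n+m}\to\mathbb R^m$ is the second projection. Then $J(x,u,\gamma) =0$ for all $x\in \mathbb R^n$, all $\gamma\in \operatorname{argmin}_f(x)$ and all $u\in \nabla_x g$.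
   Context: For $h:\mathbb R^k\to\mathbb R$ and $z_0\in\mathbb R^k$, $\nabla_{z_0}h=\{u\in\mathbb R^k: h(z)-h(z_0)\ge u\cdot(z-z_0)\text{ for all } z \text{ sufficiently near } z_0\}$. $\operatorname{argmin}_f(x)=\{\gamma\in\mathbb R^m: \inf_{y}f(x,y)=f(x,\gamma)\}$. *)

theory Defs
  imports "HOL-Analysis.Analysis"
begin

definition subgrad :: "('a::real_inner \<Rightarrow> real) \<Rightarrow> 'a \<Rightarrow> 'a set" where
  "subgrad h z0 = {u. \<exists>e>0. \<forall>z. dist z z0 < e \<longrightarrow> h z - h z0 \<ge> u \<bullet> (z - z0)}"

definition resolvent :: "('a::real_inner \<Rightarrow> real) \<Rightarrow> 'a \<Rightarrow> 'a" where
  "resolvent h u = (THE z. \<exists>v\<in>subgrad h z. u = z + v)"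

definition marg :: "('a \<times> 'b \<Rightarrow> real) \<Rightarrow> 'a \<Rightarrow> real" where
  "marg f x = (INF y. f (x, y))"

definition argmin_f :: "('a \<times> 'b \<Rightarrow> real) \<Rightarrow> 'a \<Rightarrow> 'b set" where
  "argmin_f f x = {\<gamma>. (INF y. f (x, y)) = f (x, \<gamma>)}"

definition Jmap :: "('a::real_inner \<times> 'b::real_inner \<Rightarrow> real) \<Rightarrow> 'a \<Rightarrow> 'a \<Rightarrow> 'b \<Rightarrow> 'b" where
  "Jmap f x u y = y - snd (resolvent f (resolvent (marg f) (x + u) + u, y))"

end

theory Submission
  imports Defs
begin

text \<open>
  Since g is convex, x is the unique point with x + u \<in> x + \<nabla>g(x), so H1(x + u) = x.
  For \<gamma> \<in> argmin f(x, -) the pair (u, 0) is a subgradient of f at (x, \<gamma>), because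
  f(x', y') \<ge> g(x') \<ge> g(x) + u \<bullet> (x' - x) = f(x, \<gamma>) + (u, 0) \<bullet> ((x', y') - (x, \<gamma>)).
  Hence H(x + u, \<gamma>) = (x, \<gamma>) and J(x, u, \<gamma>) = \<gamma> - \<gamma> = 0.
  Single-valuedness of both resolvents comes from the monotonicity of subgradients of
  convex functions, for which the local subgradient inequality extends to a global one.
\<close>

lemma convex_on_subgrad_global:
  fixes h :: "'a::real_inner \<Rightarrow> real"
  assumes convex: "convex_on UNIV h" and u: "u \<in> subgrad h z"
  shows "u \<bullet> (w - z) \<le> h w - h z"
proof (cases "w = z")
  case True
  then show ?thesis by simp
next
  case False
  from u obtain e where "e > 0" and local: "\<And>p. dist p z < e \<Longrightarrow> u \<bullet> (p - z) \<le> h p - h z"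
    unfolding subgrad_def by blast
  have norm_pos: "norm (w - z) > 0" using False by simp
  define t where "t = min (1/2) (e / (2 * norm (w - z)))"
  have t: "0 < t" "t \<le> 1" using \<open>e > 0\<close> norm_pos by (auto simp: t_def)
  have "t * norm (w - z) \<le> e / (2 * norm (w - z)) * norm (w - z)"
    using norm_pos by (intro mult_right_mono) (auto simp: t_def)
  also have "\<dots> < e" using norm_pos \<open>e > 0\<close> by simp
  finally have near: "t * norm (w - z) < e" .
  define p where "p = (1 - t) *\<^sub>R z + t *\<^sub>R w"
  have p_minus_z: "p - z = t *\<^sub>R (w - z)" by (simp add: p_def algebra_simps)
  have "t * (u \<bullet> (w - z)) \<le> h p - h z"
    using local[of p] near t by (simp add: dist_norm p_minus_z)
  also have "h p \<le> (1 - t) * h z + t * h w"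
    unfolding p_def using convex_onD[OF convex, of t z w] t by simp
  finally have "t * (u \<bullet> (w - z)) \<le> t * (h w - h z)" by (simp add: algebra_simps)
  then show ?thesis using t by simp
qed

lemma convex_on_subgrad_monotone:
  fixes h :: "'a::real_inner \<Rightarrow> real"
  assumes "convex_on UNIV h" and "v \<in> subgrad h z" and "v' \<in> subgrad h z'"
  shows "0 \<le> (v - v') \<bullet> (z - z')"
  using convex_on_subgrad_global[OF assms(1,2), of z'] convex_on_subgrad_global[OF assms(1,3), of z]
  by (simp add: inner_diff_left inner_diff_right inner_commute)

lemma resolvent_eqI:
  fixes h :: "'a::real_inner \<Rightarrow> real"
  assumes convex: "convex_on UNIV h" and v: "v \<in> subgrad h z"
  shows "resolvent h (z + v) = z"
  unfolding resolvent_def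
proof (rule the_equality)
  show "\<exists>v'\<in>subgrad h z. z + v = z + v'" using v by blast
next
  fix z' assume "\<exists>v'\<in>subgrad h z'. z + v = z' + v'"
  then obtain v' where v': "v' \<in> subgrad h z'" and eq: "z + v = z' + v'" by blast
  have "v - v' = z' - z" using eq by (simp add: algebra_simps)
  then have "(z' - z) \<bullet> (z' - z) \<le> 0"
    using convex_on_subgrad_monotone[OF convex v v'] by (simp add: inner_diff_right)
  then show "z' = z" by (metis inner_gt_zero_iff not_le right_minus_eq)
qed

lemma marg_le:
  assumes "bdd_below (range (\<lambda>y. f (x, y)))"
  shows "marg f x \<le> f (x, y)"
  unfolding marg_def using assms by (rule cINF_lower) simp

lemma convex_on_marg:
  fixes f :: "'a::real_vector \<times> 'b::real_vector \<Rightarrow> real"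
  assumes convex: "convex_on UNIV f" and bdd: "\<forall>x. bdd_below (range (\<lambda>y. f (x, y)))"
  shows "convex_on UNIV (marg f)"
proof (rule convex_onI)
  fix t :: real and a b :: 'a
  assume t: "0 < t" "t < 1"
  let ?c = "(1 - t) *\<^sub>R a + t *\<^sub>R b"
  have joint: "marg f ?c \<le> (1 - t) * f (a, y1) + t * f (b, y2)" for y1 y2
  proof -
    have "marg f ?c \<le> f (?c, (1 - t) *\<^sub>R y1 + t *\<^sub>R y2)"
      using bdd by (intro marg_le) simp
    also have "(?c, (1 - t) *\<^sub>R y1 + t *\<^sub>R y2) = (1 - t) *\<^sub>R (a, y1) + t *\<^sub>R (b, y2)" by simp
    also have "f \<dots> \<le> (1 - t) * f (a, y1) + t * f (b, y2)"
      using convex_onD[OF convex, of t "(a, y1)" "(b, y2)"] t by simp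
    finally show ?thesis .
  qed
  \<comment> \<open>Pass to the infimum first over y1, then over y2, isolating each in turn.\<close>
  have inf_a: "marg f ?c \<le> (1 - t) * marg f a + t * f (b, y2)" for y2
  proof -
    have "(marg f ?c - t * f (b, y2)) / (1 - t) \<le> marg f a"
      unfolding marg_def[of f a]
      by (rule cINF_greatest) (use joint t in \<open>auto simp: pos_divide_le_eq algebra_simps\<close>)
    then show ?thesis using t by (simp add: pos_divide_le_eq algebra_simps)
  qed
  have "(marg f ?c - (1 - t) * marg f a) / t \<le> marg f b"
    unfolding marg_def[of f b]
    by (rule cINF_greatest) (use inf_a t in \<open>auto simp: pos_divide_le_eq algebra_simps\<close>)
  then show "marg f ?c \<le> (1 - t) * marg f a + t * marg f b"
    using t by (simp add: pos_divide_le_eq algebra_simps)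
qed simp

lemma subgrad_marg_imp_subgrad_argmin:
  fixes f :: "'a::real_inner \<times> 'b::real_inner \<Rightarrow> real"
  assumes convex: "convex_on UNIV f" and bdd: "\<forall>x. bdd_below (range (\<lambda>y. f (x, y)))"
    and \<gamma>: "\<gamma> \<in> argmin_f f x" and u: "u \<in> subgrad (marg f) x"
  shows "(u, 0) \<in> subgrad f (x, \<gamma>)"
  unfolding subgrad_def
proof (intro CollectI exI[of _ 1] conjI allI impI)
  fix p :: "'a \<times> 'b"
  obtain x' y' where p: "p = (x', y')" by fastforce
  have "f (x, \<gamma>) = marg f x" using \<gamma> unfolding argmin_f_def marg_def by simp
  moreover have "marg f x' \<le> f (x', y')" using bdd by (intro marg_le) simp
  moreover have "u \<bullet> (x' - x) \<le> marg f x' - marg f x"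
    using convex_on_subgrad_global[OF convex_on_marg[OF convex bdd] u] .
  ultimately show "(u, 0) \<bullet> (p - (x, \<gamma>)) \<le> f p - f (x, \<gamma>)"
    by (simp add: p inner_Pair)
qed simp

theorem proposition2p13:
  fixes f :: "(real^'n) \<times> (real^'m) \<Rightarrow> real"
  assumes "convex_on UNIV f"
    and "\<forall>x. bdd_below (range (\<lambda>y. f (x, y)))"
  shows "\<forall>x u \<gamma>. \<gamma> \<in> argmin_f f x \<longrightarrow> u \<in> subgrad (marg f) x \<longrightarrow> Jmap f x u \<gamma> = 0"
proof (intro allI impI)
  fix x u \<gamma>
  assume \<gamma>: "\<gamma> \<in> argmin_f f x" and u: "u \<in> subgrad (marg f) x"
  have H1: "resolvent (marg f) (x + u) = x"
    using resolvent_eqI[OF convex_on_marg[OF assms] u] .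
  have "resolvent f ((x, \<gamma>) + (u, 0)) = (x, \<gamma>)"
    using resolvent_eqI[OF assms(1) subgrad_marg_imp_subgrad_argmin[OF assms \<gamma> u]] .
  then show "Jmap f x u \<gamma> = 0"
    unfolding Jmap_def H1 by simp
qed

end
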